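(* Let $n\ge 3$ and $0\le k\le n-3$, and let $G$ be a connected graph of order $n$ with exactly $k$ pendent vertices. Then $$SO(G)\le \frac{(n-k-2)(n-k-1)^2}{\sqrt2}+k\sqrt{(n-1)^2+1}+(n-k-1)\sqrt{(n-1)^2+(n-k-1)^2},$$ with equality if and only if $G$ is isomorphic to the graph obtained by attaching $k$ pendent edges to one vertex of the complete graph $K_{n-k}$.
   Context: For a graph $G$, $d_G(w)$ denotes the degree of vertex $w$, and the Sombor index is $SO(G)=\sum_{ab\in E(G)}\sqrt{d_G(a)^2+d_G(b)^2}$. A pendent vertex is a vertex of degree one. $K_m$ denotes the complete graph on $m$ vertices. *)

theory Defs
  imports Complex_Main
begin

definition simple_graph :: "'a set \<Rightarrow> 'a set set \<Rightarrow> bool" where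
  "simple_graph V E \<longleftrightarrow> finite V \<and>
     (\<forall>e\<in>E. \<exists>a b. e = {a, b} \<and> a \<noteq> b \<and> a \<in> V \<and> b \<in> V)"

definition degree :: "'a set set \<Rightarrow> 'a \<Rightarrow> nat" where
  "degree E v = card {e \<in> E. v \<in> e}"

definition connected_graph :: "'a set \<Rightarrow> 'a set set \<Rightarrow> bool" where
  "connected_graph V E \<longleftrightarrow>
     (\<forall>u\<in>V. \<forall>v\<in>V. (\<lambda>x y. {x, y} \<in> E)\<^sup>*\<^sup>* u v)"

definition pendent_vertices :: "'a set \<Rightarrow> 'a set set \<Rightarrow> 'a set" where
  "pendent_vertices V E = {v \<in> V. degree E v = 1}"

definition sombor :: "'a set set \<Rightarrow> real" where
  "sombor E = (\<Sum>e\<in>E. sqrt (\<Sum>v\<in>e. (real (degree E v))^2))"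

definition graph_iso :: "'a set \<Rightarrow> 'a set set \<Rightarrow> 'b set \<Rightarrow> 'b set set \<Rightarrow> bool" where
  "graph_iso V E V' E' \<longleftrightarrow> (\<exists>f. bij_betw f V V' \<and>
     (\<forall>a\<in>V. \<forall>b\<in>V. {a, b} \<in> E \<longleftrightarrow> {f a, f b} \<in> E'))"

text \<open>K_{n-k} on vertices 0..n-k-1 with k pendent edges attached at vertex 0
  (pendent vertices n-k..n-1).\<close>
definition kite_vertices :: "nat \<Rightarrow> nat set" where
  "kite_vertices n = {0..<n}"

definition kite_edges :: "nat \<Rightarrow> nat \<Rightarrow> nat set set" where
  "kite_edges n k = {{a, b} | a b. a < n - k \<and> b < n - k \<and> a \<noteq> b}
                   \<union> {{0, b} | b. n - k \<le> b \<and> b < n}"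

end

theory Submission
  imports Defs
begin

text \<open>Let Q be the set of non-pendent vertices, c = |Q| - 1, and for v in Q let p(v) be the
  number of pendent vertices adjacent to v, so that d(v) \<le> c + p(v) and \<Sum> p(v) \<le> k.
  Since sqrt (A^2 + B^2) + sqrt 2 C \<le> sqrt (A^2 + C^2) + sqrt (B^2 + C^2) for 0 \<le> C \<le> A, B,
  the term of an edge ab inside Q is at most sqrt 2 c + D(p(a)) + D(p(b)), where
  D(s) = sqrt ((c + s)^2 + c^2) - sqrt 2 c (edge_gain c s) is convex with D(0) = 0; hence \<Sum> D(p(v)) \<le> D(k).
  Summing over the at most (|Q| choose 2) edges inside Q, and bounding each of the at most k
  edges at pendent vertices by sqrt ((n - 1)^2 + 1), gives exactly the right-hand side.
  Equality forces Q to be a clique and every pendent vertex to hang from a vertex of degree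
  n - 1.\<close>

lemma sqrt_sum_squares_submodular:
  fixes A B C :: real
  assumes "0 \<le> C" "C \<le> A" "C \<le> B"
  shows "sqrt (A\<^sup>2 + B\<^sup>2) + sqrt 2 * C \<le> sqrt (A\<^sup>2 + C\<^sup>2) + sqrt (B\<^sup>2 + C\<^sup>2)"
proof -
  have "A\<^sup>2 \<ge> C\<^sup>2" "B\<^sup>2 \<ge> C\<^sup>2" using assms by (auto intro: power_mono)
  hence "(A\<^sup>2 - C\<^sup>2) * (B\<^sup>2 - C\<^sup>2) \<ge> 0" by simp
  hence key: "(2 * C\<^sup>2) * (A\<^sup>2 + B\<^sup>2) \<le> (A\<^sup>2 + C\<^sup>2) * (B\<^sup>2 + C\<^sup>2)" by (simp add: algebra_simps)
  have cross: "sqrt 2 * C * sqrt (A\<^sup>2 + B\<^sup>2) \<le> sqrt (A\<^sup>2 + C\<^sup>2) * sqrt (B\<^sup>2 + C\<^sup>2)"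
  proof -
    have "sqrt 2 * C * sqrt (A\<^sup>2 + B\<^sup>2) = sqrt ((2 * C\<^sup>2) * (A\<^sup>2 + B\<^sup>2))"
      using assms by (simp add: real_sqrt_mult)
    also have "\<dots> \<le> sqrt ((A\<^sup>2 + C\<^sup>2) * (B\<^sup>2 + C\<^sup>2))" using key by simp
    finally show ?thesis by (simp add: real_sqrt_mult)
  qed
  have "(sqrt (A\<^sup>2 + B\<^sup>2) + sqrt 2 * C)\<^sup>2
        = A\<^sup>2 + B\<^sup>2 + 2 * C\<^sup>2 + 2 * (sqrt 2 * C * sqrt (A\<^sup>2 + B\<^sup>2))"
    using assms by (simp add: power2_eq_square algebra_simps)
  also have "\<dots> \<le> A\<^sup>2 + B\<^sup>2 + 2 * C\<^sup>2 + 2 * (sqrt (A\<^sup>2 + C\<^sup>2) * sqrt (B\<^sup>2 + C\<^sup>2))"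
    using cross by simp
  also have "\<dots> = (sqrt (A\<^sup>2 + C\<^sup>2) + sqrt (B\<^sup>2 + C\<^sup>2))\<^sup>2"
    by (simp add: power2_eq_square algebra_simps)
  finally show ?thesis by (rule power2_le_imp_le) simp
qed

definition edge_gain :: "real \<Rightarrow> real \<Rightarrow> real" where
  "edge_gain c s = sqrt ((c + s)\<^sup>2 + c\<^sup>2) - sqrt 2 * c"

lemma sqrt_double_square: "0 \<le> c \<Longrightarrow> sqrt (2 * c\<^sup>2) = sqrt 2 * (c::real)"
  by (simp add: real_sqrt_mult)

lemma edge_gain_nonneg:
  assumes "0 \<le> c" "0 \<le> s"
  shows "0 \<le> edge_gain c s"
proof -
  have "c\<^sup>2 \<le> (c + s)\<^sup>2" using assms by (intro power_mono) auto
  hence "sqrt (2 * c\<^sup>2) \<le> sqrt ((c + s)\<^sup>2 + c\<^sup>2)" by simp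
  thus ?thesis using sqrt_double_square[OF assms(1)] unfolding edge_gain_def by linarith
qed

lemma edge_gain_zero: "0 \<le> c \<Longrightarrow> edge_gain c 0 = 0"
  by (simp add: edge_gain_def sqrt_double_square)

text \<open>Convexity of the gain in s, via the triangle inequality for the Euclidean norm.\<close>

lemma edge_gain_le_chord:
  assumes "0 \<le> c" "0 \<le> s" "s \<le> K" "0 < K"
  shows "edge_gain c s \<le> s / K * edge_gain c K"
proof -
  define t where "t = s / K"
  have t: "0 \<le> t" "t \<le> 1" using assms by (auto simp: t_def)
  have scale: "sqrt ((a * x)\<^sup>2 + (a * y)\<^sup>2) = a * sqrt (x\<^sup>2 + y\<^sup>2)" if "0 \<le> a" for a x y :: real
  proof -
    have "(a * x)\<^sup>2 + (a * y)\<^sup>2 = a\<^sup>2 * (x\<^sup>2 + y\<^sup>2)" by (simp add: power_mult_distrib algebra_simps)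
    thus ?thesis using that by (simp add: real_sqrt_mult)
  qed
  have "c + s = (1 - t) * c + t * (c + K)" "c = (1 - t) * c + t * c"
    using assms by (auto simp: t_def field_simps)
  hence "sqrt ((c + s)\<^sup>2 + c\<^sup>2) = sqrt (((1 - t) * c + t * (c + K))\<^sup>2 + ((1 - t) * c + t * c)\<^sup>2)"
    by metis
  also have "\<dots> \<le> sqrt (((1 - t) * c)\<^sup>2 + ((1 - t) * c)\<^sup>2) + sqrt ((t * (c + K))\<^sup>2 + (t * c)\<^sup>2)"
    by (rule real_sqrt_sum_squares_triangle_ineq)
  also have "\<dots> = (1 - t) * (sqrt 2 * c) + t * sqrt ((c + K)\<^sup>2 + c\<^sup>2)"
    using t assms(1) scale[of "1 - t" c c] scale[of t "c + K" c] by (simp add: sqrt_double_square)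
  finally show ?thesis by (simp add: edge_gain_def t_def algebra_simps)
qed

definition sombor_bound :: "nat \<Rightarrow> nat \<Rightarrow> real" where
  "sombor_bound n k = real (n - k - 2) * (real (n - k - 1))\<^sup>2 / sqrt 2
            + real k * sqrt ((real n - 1)\<^sup>2 + 1)
            + real (n - k - 1) * sqrt ((real n - 1)\<^sup>2 + (real (n - k - 1))\<^sup>2)"

lemma real_choose_two: "real (m choose 2) = real m * (real m - 1) / 2"
proof -
  have "even (m * (m - 1))" by auto
  hence "2 * (m choose 2) = m * (m - 1)" by (simp add: choose_two)
  hence "2 * real (m choose 2) = real m * real (m - 1)" by (metis of_nat_mult of_nat_numeral)
  thus ?thesis by (cases m) auto
qed

lemma divide_sqrt_two: "(x::real) / sqrt 2 = x * sqrt 2 / 2"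
  by (simp add: field_simps)

lemma sombor_bound_clique_form:
  assumes "m = n - k" "k + 3 \<le> n" "c = real m - 1"
  shows "sombor_bound n k = real (m choose 2) * (sqrt 2 * c) + c * edge_gain c (real k)
           + real k * sqrt ((real n - 1)\<^sup>2 + 1)"
proof -
  have nk: "real (n - k - 2) = c - 1" "real (n - k - 1) = c" "c + real k = real n - 1"
    using assms by (auto simp: of_nat_diff)
  have "real m = c + 1" using assms(3) by simp
  hence choose: "real (m choose 2) = (c + 1) * c / 2" by (simp add: real_choose_two)
  hence key: "(c - 1) * c\<^sup>2 / sqrt 2 = real (m choose 2) * (sqrt 2 * c) - c * (sqrt 2 * c)"
    unfolding divide_sqrt_two choose by (simp add: algebra_simps power2_eq_square)
  have "sombor_bound n k = (c - 1) * c\<^sup>2 / sqrt 2 + real k * sqrt ((real n - 1)\<^sup>2 + 1)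
          + c * sqrt ((real n - 1)\<^sup>2 + c\<^sup>2)"
    unfolding sombor_bound_def nk by simp
  also have "\<dots> = real (m choose 2) * (sqrt 2 * c) + c * edge_gain c (real k)
                   + real k * sqrt ((real n - 1)\<^sup>2 + 1)"
    unfolding key edge_gain_def nk(3) by (simp add: right_diff_distrib)
  finally show ?thesis .
qed

definition clique_edges :: "'a set \<Rightarrow> 'a set set" where
  "clique_edges A = {B. B \<subseteq> A \<and> card B = 2}"

lemma clique_edges_eq: "clique_edges A = {{a, b} | a b. a \<in> A \<and> b \<in> A \<and> a \<noteq> b}"
  unfolding clique_edges_def by (auto simp: card_2_iff)

lemma finite_clique_edges: "finite A \<Longrightarrow> finite (clique_edges A)"
  unfolding clique_edges_def by simp

lemma card_clique_edges: "finite A \<Longrightarrow> card (clique_edges A) = card A choose 2"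
  unfolding clique_edges_def by (rule n_subsets)

definition is_kite :: "'a set \<Rightarrow> 'a set set \<Rightarrow> 'a set \<Rightarrow> 'a set \<Rightarrow> 'a \<Rightarrow> bool" where
  "is_kite V E Q P u \<longleftrightarrow>
     Q \<inter> P = {} \<and> V = Q \<union> P \<and> u \<in> Q \<and> E = clique_edges Q \<union> (\<lambda>x. {u, x}) ` P"

locale sgraph =
  fixes V :: "'a set" and E :: "'a set set"
  assumes simple: "simple_graph V E"
begin

abbreviation "d \<equiv> degree E"
abbreviation "P \<equiv> pendent_vertices V E"
abbreviation "Q \<equiv> V - P"

definition "core_edges = {e \<in> E. e \<subseteq> Q}"
definition "pendent_edges = E - core_edges"
definition "sombor_term e = sqrt (\<Sum>v\<in>e. (real (d v))\<^sup>2)"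
definition "pendent_degree v = card {e \<in> pendent_edges. v \<in> e}"

lemma finite_V: "finite V"
  using simple by (simp add: simple_graph_def)

lemma edgeE:
  assumes "e \<in> E"
  obtains a b where "e = {a, b}" "a \<noteq> b" "a \<in> V" "b \<in> V"
  using simple assms unfolding simple_graph_def by blast

lemma edges_subset_Pow: "E \<subseteq> Pow V"
  by (auto elim: edgeE)

lemma finite_E: "finite E"
  using finite_subset[OF edges_subset_Pow] finite_V by simp

lemma finite_core_edges: "finite core_edges"
  using finite_E by (simp add: core_edges_def)

lemma finite_pendent_edges: "finite pendent_edges"
  using finite_E by (simp add: pendent_edges_def)

lemma pendent_vertices_subset: "P \<subseteq> V"
  by (auto simp: pendent_vertices_def)

lemma card_non_pendent: "card Q = card V - card P"
  using pendent_vertices_subset finite_V by (simp add: card_Diff_subset finite_subset)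

lemma sombor_term_doubleton:
  "a \<noteq> b \<Longrightarrow> sombor_term {a, b} = sqrt ((real (d a))\<^sup>2 + (real (d b))\<^sup>2)"
  by (simp add: sombor_term_def)

lemma sombor_eq_sum_terms: "sombor E = (\<Sum>e\<in>E. sombor_term e)"
  by (simp add: sombor_def sombor_term_def)

lemma sombor_split:
  "sombor E = (\<Sum>e\<in>core_edges. sombor_term e) + (\<Sum>e\<in>pendent_edges. sombor_term e)"
proof -
  have "E = core_edges \<union> pendent_edges" "core_edges \<inter> pendent_edges = {}"
    by (auto simp: pendent_edges_def core_edges_def)
  thus ?thesis
    using sum.union_disjoint[OF finite_core_edges finite_pendent_edges] sombor_eq_sum_terms
    by metis
qed

lemma singleton_not_edge: "{v} \<notin> E"
proof
  assume "{v} \<in> E"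
  then obtain a b where "{v} = {a, b}" "a \<noteq> b" by (rule edgeE)
  thus False by (metis insert_iff singletonD)
qed

lemma degree_eq_card_neighbours: "d v = card {w \<in> V. {v, w} \<in> E}"
proof -
  define N where "N = {w \<in> V. {v, w} \<in> E}"
  have "{e \<in> E. v \<in> e} = (\<lambda>w. {v, w}) ` N"
  proof (intro equalityI subsetI)
    fix e assume e: "e \<in> {e \<in> E. v \<in> e}"
    then obtain a b where "e = {a, b}" "a \<in> V" "b \<in> V" by (auto elim: edgeE)
    with e obtain w where "e = {v, w}" "w \<in> V" by (auto simp: insert_commute)
    thus "e \<in> (\<lambda>w. {v, w}) ` N" using e by (auto simp: N_def)
  qed (auto simp: N_def)
  moreover have "v \<notin> N" using singleton_not_edge by (auto simp: N_def)
  hence "inj_on (\<lambda>w. {v, w}) N" by (auto simp: inj_on_def doubleton_eq_iff)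
  ultimately show ?thesis unfolding degree_def N_def by (simp add: card_image)
qed

lemma card_incident_edges_within:
  assumes "v \<in> W" "finite W"
  shows "card {e \<in> E. v \<in> e \<and> e \<subseteq> W} \<le> card W - 1"
proof -
  have "{e \<in> E. v \<in> e \<and> e \<subseteq> W} \<subseteq> (\<lambda>w. {v, w}) ` (W - {v})"
    by (auto elim!: edgeE)
  hence "card {e \<in> E. v \<in> e \<and> e \<subseteq> W} \<le> card ((\<lambda>w. {v, w}) ` (W - {v}))"
    by (intro card_mono) (use assms in auto)
  also have "\<dots> \<le> card (W - {v})" by (rule card_image_le) (use assms in auto)
  finally show ?thesis using assms by simp
qed

lemma degree_le:
  assumes "v \<in> V"
  shows "d v \<le> card V - 1"
proof -
  have "{e \<in> E. v \<in> e} = {e \<in> E. v \<in> e \<and> e \<subseteq> V}" using edges_subset_Pow by auto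
  thus ?thesis using card_incident_edges_within[OF assms finite_V] by (simp add: degree_def)
qed

lemma core_degree_le:
  assumes "v \<in> Q"
  shows "card {e \<in> core_edges. v \<in> e} \<le> card Q - 1"
proof -
  have "{e \<in> core_edges. v \<in> e} = {e \<in> E. v \<in> e \<and> e \<subseteq> Q}" by (auto simp: core_edges_def)
  thus ?thesis using card_incident_edges_within[OF assms] finite_V by simp
qed

lemma core_edges_subset_clique_edges: "core_edges \<subseteq> clique_edges Q"
  by (auto simp: core_edges_def clique_edges_eq elim!: edgeE)

lemma degree_split: "d v = card {e \<in> core_edges. v \<in> e} + pendent_degree v"
proof -
  have "{e \<in> E. v \<in> e} = {e \<in> core_edges. v \<in> e} \<union> {e \<in> pendent_edges. v \<in> e}"
       "{e \<in> core_edges. v \<in> e} \<inter> {e \<in> pendent_edges. v \<in> e} = {}"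
    by (auto simp: core_edges_def pendent_edges_def)
  thus ?thesis using finite_core_edges finite_pendent_edges
    unfolding degree_def pendent_degree_def by (simp add: card_Un_disjoint)
qed

lemma pendent_edge_unique:
  assumes "x \<in> P" "e1 \<in> E" "x \<in> e1" "e2 \<in> E" "x \<in> e2"
  shows "e1 = e2"
proof -
  have "card {e \<in> E. x \<in> e} = 1" using assms(1) by (simp add: pendent_vertices_def degree_def)
  then obtain e where e: "{e \<in> E. x \<in> e} = {e}" by (rule card_1_singletonE)
  have "e1 \<in> {e \<in> E. x \<in> e}" "e2 \<in> {e \<in> E. x \<in> e}" using assms by auto
  thus ?thesis unfolding e by simp
qed

lemma pendent_edge_has_pendent_vertex: "e \<in> pendent_edges \<Longrightarrow> \<exists>x\<in>e. x \<in> P"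
  using edges_subset_Pow by (auto simp: pendent_edges_def core_edges_def)

lemma card_pendent_edges_le: "card pendent_edges \<le> card P"
proof -
  define g where "g e = (SOME x. x \<in> e \<and> x \<in> P)" for e
  have g: "g e \<in> e \<and> g e \<in> P" if "e \<in> pendent_edges" for e
    unfolding g_def using pendent_edge_has_pendent_vertex[OF that] someI_ex[of "\<lambda>x. x \<in> e \<and> x \<in> P"]
    by blast
  have "inj_on g pendent_edges"
  proof (rule inj_onI)
    fix e1 e2 assume "e1 \<in> pendent_edges" "e2 \<in> pendent_edges" "g e1 = g e2"
    thus "e1 = e2"
      using g[of e1] g[of e2] pendent_edge_unique[of "g e1" e1 e2] by (auto simp: pendent_edges_def)
  qed
  moreover have "g ` pendent_edges \<subseteq> P" using g by auto
  ultimately show ?thesis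
    using card_inj_on_le finite_subset[OF pendent_vertices_subset finite_V] by blast
qed

lemma sum_pendent_degree_le: "(\<Sum>v\<in>Q. pendent_degree v) \<le> card P"
proof -
  have "(\<Sum>v\<in>Q. pendent_degree v) = (\<Sum>v\<in>Q. \<Sum>e\<in>{e. e \<in> pendent_edges \<and> v \<in> e}. 1::nat)"
    by (simp add: pendent_degree_def)
  also have "\<dots> = (\<Sum>e\<in>pendent_edges. card {v. v \<in> Q \<and> v \<in> e})"
    by (subst sum.swap_restrict) (use finite_pendent_edges finite_V in auto)
  also have "\<dots> \<le> (\<Sum>e\<in>pendent_edges. 1)"
  proof (rule sum_mono)
    fix e assume e: "e \<in> pendent_edges"
    then obtain a b where ab: "e = {a, b}" by (auto simp: pendent_edges_def elim: edgeE)
    obtain x where x: "x \<in> e" "x \<in> P" using pendent_edge_has_pendent_vertex[OF e] by blast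
    have "{v. v \<in> Q \<and> v \<in> e} \<subseteq> e - {x}" using x by auto
    hence "card {v. v \<in> Q \<and> v \<in> e} \<le> card (e - {x})" by (intro card_mono) (simp_all add: ab)
    also have "\<dots> \<le> 1" using ab x by (auto simp: card_insert_if)
    finally show "card {v. v \<in> Q \<and> v \<in> e} \<le> 1" .
  qed
  also have "\<dots> \<le> card P" using card_pendent_edges_le by simp
  finally show ?thesis .
qed

lemma sombor_term_pendent_edge_le:
  assumes "e \<in> pendent_edges"
  shows "sombor_term e \<le> sqrt ((real (card V) - 1)\<^sup>2 + 1)"
proof -
  obtain a b where ab: "e = {a, b}" "a \<noteq> b" "a \<in> V" "b \<in> V"
    using assms by (auto simp: pendent_edges_def elim: edgeE)
  obtain x where x: "x \<in> e" "x \<in> P" using pendent_edge_has_pendent_vertex[OF assms] by blast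
  have "x \<in> V" using x pendent_vertices_subset by auto
  hence V1: "card V \<ge> 1" using finite_V card_0_eq by fastforce
  have bound: "sqrt ((real (d x))\<^sup>2 + (real (d y))\<^sup>2) \<le> sqrt ((real (card V) - 1)\<^sup>2 + 1)"
    if "y \<in> V" for y
  proof -
    have "real (d y) \<le> real (card V) - 1" using degree_le[OF that] V1 by linarith
    hence "(real (d y))\<^sup>2 \<le> (real (card V) - 1)\<^sup>2" by (intro power_mono) auto
    thus ?thesis using x(2) by (simp add: pendent_vertices_def)
  qed
  from x ab consider "x = a" | "x = b" by auto
  thus ?thesis
    using bound[OF ab(4)] bound[OF ab(3)] ab sombor_term_doubleton[of a b]
    by cases (simp_all add: add.commute)
qed

lemma sombor_term_core_edge_le:
  assumes "e \<in> core_edges" "card Q \<ge> 1" "c = real (card Q) - 1"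
  shows "sombor_term e \<le> sqrt 2 * c + (\<Sum>v\<in>e. edge_gain c (real (pendent_degree v)))"
proof -
  have c0: "c \<ge> 0" using assms(2,3) by simp
  obtain a b where ab: "e = {a, b}" "a \<noteq> b" "a \<in> Q" "b \<in> Q"
    using assms(1) by (auto simp: core_edges_def elim!: edgeE)
  have sq: "(real (d v))\<^sup>2 \<le> (c + real (pendent_degree v))\<^sup>2" if "v \<in> Q" for v
  proof -
    have "d v \<le> card Q - 1 + pendent_degree v"
      using degree_split core_degree_le[OF that] by (metis add_le_mono1)
    hence "real (d v) \<le> c + real (pendent_degree v)" using assms(2,3) by linarith
    thus ?thesis by (intro power_mono) auto
  qed
  have "sombor_term e \<le> sqrt ((c + real (pendent_degree a))\<^sup>2 + (c + real (pendent_degree b))\<^sup>2)"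
    using ab sombor_term_doubleton sq[of a] sq[of b] by simp
  also have "\<dots> \<le> sqrt ((c + real (pendent_degree a))\<^sup>2 + c\<^sup>2)
                 + sqrt ((c + real (pendent_degree b))\<^sup>2 + c\<^sup>2) - sqrt 2 * c"
    using sqrt_sum_squares_submodular[of c "c + real (pendent_degree a)" "c + real (pendent_degree b)"] c0
    by simp
  also have "\<dots> = sqrt 2 * c + (\<Sum>v\<in>e. edge_gain c (real (pendent_degree v)))"
    using ab by (simp add: edge_gain_def)
  finally show ?thesis .
qed

text \<open>Each v in Q lies in at most c core edges, and the gains are nonnegative.\<close>

lemma sum_core_edges_le:
  assumes "card Q \<ge> 1" "c = real (card Q) - 1"
  shows "(\<Sum>e\<in>core_edges. sombor_term e)
         \<le> real (card core_edges) * (sqrt 2 * c)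
           + c * (\<Sum>v\<in>Q. edge_gain c (real (pendent_degree v)))"
proof -
  define F where "F v = edge_gain c (real (pendent_degree v))" for v
  have F0: "F v \<ge> 0" for v using edge_gain_nonneg assms by (simp add: F_def)
  have "(\<Sum>e\<in>core_edges. sombor_term e) \<le> (\<Sum>e\<in>core_edges. sqrt 2 * c + (\<Sum>v\<in>e. F v))"
    by (rule sum_mono) (use sombor_term_core_edge_le assms in \<open>simp add: F_def\<close>)
  also have "\<dots> = real (card core_edges) * (sqrt 2 * c) + (\<Sum>e\<in>core_edges. \<Sum>v\<in>e. F v)"
    by (simp add: sum.distrib)
  also have "(\<Sum>e\<in>core_edges. \<Sum>v\<in>e. F v) = (\<Sum>e\<in>core_edges. \<Sum>v\<in>{v. v \<in> Q \<and> v \<in> e}. F v)"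
  proof (rule sum.cong[OF refl])
    fix e assume "e \<in> core_edges"
    hence "{v. v \<in> Q \<and> v \<in> e} = e" by (auto simp: core_edges_def)
    thus "(\<Sum>v\<in>e. F v) = (\<Sum>v\<in>{v. v \<in> Q \<and> v \<in> e}. F v)" by simp
  qed
  also have "(\<Sum>e\<in>core_edges. \<Sum>v\<in>{v. v \<in> Q \<and> v \<in> e}. F v)
             = (\<Sum>v\<in>Q. real (card {e \<in> core_edges. v \<in> e}) * F v)"
    by (subst sum.swap_restrict) (use finite_core_edges finite_V in auto)
  also have "\<dots> \<le> (\<Sum>v\<in>Q. c * F v)"
  proof (intro sum_mono mult_right_mono F0)
    fix v assume "v \<in> Q"
    thus "real (card {e \<in> core_edges. v \<in> e}) \<le> c"
      using core_degree_le[of v] assms by linarith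
  qed
  finally show ?thesis by (simp add: F_def sum_distrib_left)
qed

lemma sum_edge_gain_le:
  assumes "c \<ge> 0"
  shows "(\<Sum>v\<in>Q. edge_gain c (real (pendent_degree v))) \<le> edge_gain c (real (card P))"
proof (cases "card P = 0")
  case True
  hence "\<forall>v\<in>Q. pendent_degree v = 0" using sum_pendent_degree_le finite_V by simp
  thus ?thesis using True edge_gain_zero[OF assms] by simp
next
  case False
  define K where "K = real (card P)"
  have K0: "K > 0" using False by (simp add: K_def)
  have sum_le: "(\<Sum>v\<in>Q. real (pendent_degree v)) \<le> K"
    using sum_pendent_degree_le unfolding K_def by (metis of_nat_le_iff of_nat_sum)
  have "(\<Sum>v\<in>Q. edge_gain c (real (pendent_degree v)))
        \<le> (\<Sum>v\<in>Q. real (pendent_degree v) / K * edge_gain c K)"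
  proof (rule sum_mono)
    fix v assume "v \<in> Q"
    hence "real (pendent_degree v) \<le> K"
      using sum_le member_le_sum[of v Q "\<lambda>v. real (pendent_degree v)"] finite_V by force
    thus "edge_gain c (real (pendent_degree v)) \<le> real (pendent_degree v) / K * edge_gain c K"
      using edge_gain_le_chord assms K0 by simp
  qed
  also have "\<dots> = (\<Sum>v\<in>Q. real (pendent_degree v)) / K * edge_gain c K"
    by (simp add: sum_distrib_right sum_divide_distrib)
  also have "\<dots> \<le> 1 * edge_gain c K"
    using sum_le K0 edge_gain_nonneg[OF assms, of K] by (intro mult_right_mono) auto
  finally show ?thesis by (simp add: K_def)
qed

text \<open>The two slack terms vanish exactly in the extremal case.\<close>

lemma sombor_plus_slack_le_bound:
  assumes "card P + 3 \<le> card V"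
  shows "sombor E + real ((card Q choose 2) - card core_edges) * (sqrt 2 * (real (card Q) - 1))
           + (\<Sum>e\<in>pendent_edges. sqrt ((real (card V) - 1)\<^sup>2 + 1) - sombor_term e)
         \<le> sombor_bound (card V) (card P)"
proof -
  define c where "c = real (card Q) - 1"
  define R where "R = sqrt ((real (card V) - 1)\<^sup>2 + 1)"
  have Q3: "card Q \<ge> 3" using assms card_non_pendent by simp
  hence c0: "c \<ge> 0" by (simp add: c_def)
  have "card core_edges \<le> card Q choose 2"
    using card_mono[OF finite_clique_edges core_edges_subset_clique_edges] card_clique_edges[of Q]
      finite_V by simp
  hence "real ((card Q choose 2) - card core_edges) = real (card Q choose 2) - real (card core_edges)"
    by (simp add: of_nat_diff)
  hence core: "real (card core_edges) * (sqrt 2 * c)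
               + real ((card Q choose 2) - card core_edges) * (sqrt 2 * c)
               = real (card Q choose 2) * (sqrt 2 * c)"
    by (simp add: algebra_simps)
  have "(\<Sum>e\<in>core_edges. sombor_term e)
        \<le> real (card core_edges) * (sqrt 2 * c) + c * (\<Sum>v\<in>Q. edge_gain c (real (pendent_degree v)))"
    using sum_core_edges_le[OF _ c_def] Q3 by simp
  also have "\<dots> \<le> real (card core_edges) * (sqrt 2 * c) + c * edge_gain c (real (card P))"
    using sum_edge_gain_le[OF c0] c0 by (simp add: mult_left_mono)
  finally have "(\<Sum>e\<in>core_edges. sombor_term e)
                \<le> real (card core_edges) * (sqrt 2 * c) + c * edge_gain c (real (card P))" .
  moreover have "(\<Sum>e\<in>pendent_edges. sombor_term e) + (\<Sum>e\<in>pendent_edges. R - sombor_term e)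
                 \<le> real (card P) * R"
    using card_pendent_edges_le by (simp add: sum_subtractf mult_right_mono R_def)
  moreover have "sombor_bound (card V) (card P) = real (card Q choose 2) * (sqrt 2 * c)
                   + c * edge_gain c (real (card P)) + real (card P) * R"
    using sombor_bound_clique_form card_non_pendent assms c_def R_def by simp
  ultimately show ?thesis using sombor_split core
    unfolding c_def[symmetric] R_def[symmetric] by linarith
qed

lemma sombor_le_bound:
  assumes "card P + 3 \<le> card V"
  shows "sombor E \<le> sombor_bound (card V) (card P)"
proof -
  have "0 \<le> (\<Sum>e\<in>pendent_edges. sqrt ((real (card V) - 1)\<^sup>2 + 1) - sombor_term e)"
    using sombor_term_pendent_edge_le by (simp add: sum_nonneg)
  moreover have "0 \<le> real ((card Q choose 2) - card core_edges) * (sqrt 2 * (real (card Q) - 1))"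
    using assms card_non_pendent by simp
  ultimately show ?thesis using sombor_plus_slack_le_bound[OF assms] by linarith
qed

lemma sombor_eq_bound_imp:
  assumes "card P + 3 \<le> card V" "sombor E = sombor_bound (card V) (card P)"
  shows "core_edges = clique_edges Q"
    and "\<forall>e\<in>pendent_edges. sombor_term e = sqrt ((real (card V) - 1)\<^sup>2 + 1)"
proof -
  define R where "R = sqrt ((real (card V) - 1)\<^sup>2 + 1)"
  have Q3: "card Q \<ge> 3" using assms card_non_pendent by simp
  have slack1: "0 \<le> (\<Sum>e\<in>pendent_edges. R - sombor_term e)"
    using sombor_term_pendent_edge_le by (simp add: sum_nonneg R_def)
  have slack2: "0 \<le> real ((card Q choose 2) - card core_edges) * (sqrt 2 * (real (card Q) - 1))"
    using Q3 by simp
  have "real ((card Q choose 2) - card core_edges) * (sqrt 2 * (real (card Q) - 1)) = 0"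
    using sombor_plus_slack_le_bound[OF assms(1)] assms(2) slack1 slack2
    unfolding R_def by linarith
  hence "card Q choose 2 \<le> card core_edges" using Q3 by simp
  thus "core_edges = clique_edges Q"
    using core_edges_subset_clique_edges card_clique_edges finite_clique_edges finite_V
    by (metis card_seteq finite_Diff)
  have "(\<Sum>e\<in>pendent_edges. R - sombor_term e) = 0"
    using sombor_plus_slack_le_bound[OF assms(1)] assms(2) slack1 slack2
    unfolding R_def by linarith
  thus "\<forall>e\<in>pendent_edges. sombor_term e = sqrt ((real (card V) - 1)\<^sup>2 + 1)"
    using sum_nonneg_eq_0_iff[OF finite_pendent_edges, of "\<lambda>e. R - sombor_term e"]
      sombor_term_pendent_edge_le
    by (simp add: R_def)
qed

lemma sum_sombor_term_star:
  assumes "u \<notin> W"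
  shows "(\<Sum>e\<in>(\<lambda>w. {u, w}) ` W. sombor_term e) = (\<Sum>w\<in>W. sqrt ((real (d u))\<^sup>2 + (real (d w))\<^sup>2))"
proof -
  have "inj_on (\<lambda>w. {u, w}) W" by (auto simp: inj_on_def doubleton_eq_iff)
  moreover have "sombor_term {u, w} = sqrt ((real (d u))\<^sup>2 + (real (d w))\<^sup>2)" if "w \<in> W" for w
    using assms that sombor_term_doubleton by (metis)
  ultimately show ?thesis by (simp add: sum.reindex)
qed

lemma sum_sombor_term_clique:
  assumes "finite A" "0 \<le> r" "\<And>v. v \<in> A \<Longrightarrow> real (d v) = r"
  shows "(\<Sum>e\<in>clique_edges A. sombor_term e) = real (card A choose 2) * (sqrt 2 * r)"
proof -
  have "sombor_term e = sqrt 2 * r" if e: "e \<in> clique_edges A" for e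
  proof -
    obtain a b where "e = {a, b}" "a \<in> A" "b \<in> A" "a \<noteq> b"
      using e unfolding clique_edges_eq by blast
    thus ?thesis using sombor_term_doubleton assms(2,3) by (simp add: sqrt_double_square)
  qed
  thus ?thesis using card_clique_edges[OF assms(1)] by simp
qed

lemma full_degree_adjacent:
  assumes "u \<in> V" "d u = card V - 1" "w \<in> V" "w \<noteq> u"
  shows "{u, w} \<in> E"
proof -
  have "{w \<in> V. {u, w} \<in> E} \<subseteq> V - {u}" using singleton_not_edge by auto
  moreover have "card {w \<in> V. {u, w} \<in> E} = card (V - {u})"
    using assms(1,2) degree_eq_card_neighbours finite_V by simp
  ultimately have "{w \<in> V. {u, w} \<in> E} = V - {u}" using finite_V by (simp add: card_subset_eq)
  thus ?thesis using assms(3,4) by blast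
qed

lemma pendent_neighbour_full_degree:
  assumes terms: "\<forall>e\<in>pendent_edges. sombor_term e = sqrt ((real (card V) - 1)\<^sup>2 + 1)"
    and x: "x \<in> P"
  shows "\<exists>u. {x, u} \<in> E \<and> d u = card V - 1"
proof -
  have dx: "d x = 1" using x by (simp add: pendent_vertices_def)
  hence "card {e \<in> E. x \<in> e} = 1" by (simp add: degree_def)
  then obtain e where "{e \<in> E. x \<in> e} = {e}" by (rule card_1_singletonE)
  hence e: "e \<in> E" "x \<in> e" by auto
  then obtain u where u: "e = {x, u}" "x \<noteq> u"
    by (metis doubleton_eq_iff edgeE insertE insert_commute singletonD)
  have "e \<in> pendent_edges" using e x by (auto simp: pendent_edges_def core_edges_def)
  hence "sqrt ((real (d x))\<^sup>2 + (real (d u))\<^sup>2) = sqrt ((real (card V) - 1)\<^sup>2 + 1)"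
    using terms u sombor_term_doubleton by auto
  hence "(real (d u))\<^sup>2 = (real (card V) - 1)\<^sup>2" using dx by (simp add: add.commute)
  moreover have "card V \<ge> 1"
    using x pendent_vertices_subset finite_V by (metis card_0_eq empty_iff less_one not_le subsetD)
  ultimately have "real (d u) = real (card V) - 1"
    by (simp add: power2_eq_iff_nonneg)
  hence "d u = card V - 1" by linarith
  thus ?thesis using u e by auto
qed

lemma is_kite_if_sombor_eq_bound:
  assumes "card P + 3 \<le> card V" "sombor E = sombor_bound (card V) (card P)"
  shows "\<exists>u. is_kite V E Q P u"
proof -
  have core: "core_edges = clique_edges Q"
    and terms: "\<forall>e\<in>pendent_edges. sombor_term e = sqrt ((real (card V) - 1)\<^sup>2 + 1)"
    using sombor_eq_bound_imp[OF assms] by auto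
  have E: "E = clique_edges Q \<union> pendent_edges"
    using core by (auto simp: pendent_edges_def core_edges_def)
  have partition: "Q \<inter> P = {}" "V = Q \<union> P" using pendent_vertices_subset by auto
  obtain u where u: "u \<in> Q" "pendent_edges = (\<lambda>x. {u, x}) ` P"
  proof (cases "P = {}")
    case True
    have "card Q \<noteq> 0" using assms(1) card_non_pendent by simp
    hence "Q \<noteq> {}" by (metis card.empty)
    moreover have "pendent_edges = {}" using True pendent_edge_has_pendent_vertex by blast
    ultimately show ?thesis using that True by blast
  next
    case False
    then obtain x0 where "x0 \<in> P" by blast
    then obtain u where u: "{x0, u} \<in> E" "d u = card V - 1"
      using pendent_neighbour_full_degree[OF terms] by blast
    have "u \<in> V" using u(1) edges_subset_Pow by auto
    moreover have "u \<notin> P" using u(2) assms(1) by (auto simp: pendent_vertices_def)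
    ultimately have adj: "{u, x} \<in> E" if "x \<in> P" for x
      using full_degree_adjacent[OF _ u(2)] that pendent_vertices_subset by blast
    have "pendent_edges = (\<lambda>x. {u, x}) ` P"
    proof (intro equalityI subsetI)
      fix e assume e: "e \<in> pendent_edges"
      then obtain x where x: "x \<in> e" "x \<in> P" using pendent_edge_has_pendent_vertex by blast
      hence "e = {u, x}"
        using pendent_edge_unique[OF x(2)] e adj[OF x(2)] by (auto simp: pendent_edges_def)
      thus "e \<in> (\<lambda>x. {u, x}) ` P" using x by auto
    next
      fix e assume "e \<in> (\<lambda>x. {u, x}) ` P"
      thus "e \<in> pendent_edges" using adj by (auto simp: pendent_edges_def core_edges_def)
    qed
    thus ?thesis using that \<open>u \<in> V\<close> \<open>u \<notin> P\<close> by blast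
  qed
  thus ?thesis using E partition by (auto simp: is_kite_def)
qed

end

lemma is_kite_adjacent:
  assumes "is_kite V E Q P u" "a \<in> V" "b \<in> V"
  shows "{a, b} \<in> E \<longleftrightarrow> (a \<in> Q \<and> b \<in> Q \<and> a \<noteq> b) \<or> (a = u \<and> b \<in> P) \<or> (b = u \<and> a \<in> P)"
proof -
  have kite: "Q \<inter> P = {}" "u \<in> Q" "E = clique_edges Q \<union> (\<lambda>x. {u, x}) ` P"
    using assms(1) by (auto simp: is_kite_def)
  have "{a, b} \<in> clique_edges Q \<longleftrightarrow> a \<in> Q \<and> b \<in> Q \<and> a \<noteq> b"
    by (auto simp: clique_edges_def card_2_iff doubleton_eq_iff)
  moreover have "{a, b} \<in> (\<lambda>x. {u, x}) ` P \<longleftrightarrow> (a = u \<and> b \<in> P) \<or> (b = u \<and> a \<in> P)"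
    using kite(1,2) by (auto simp: doubleton_eq_iff)
  ultimately show ?thesis using kite(3) by blast
qed

lemma is_kite_simple: "is_kite V E Q P u \<Longrightarrow> finite V \<Longrightarrow> simple_graph V E"
  unfolding simple_graph_def is_kite_def clique_edges_eq by blast

lemma is_kite_degree:
  assumes kite: "is_kite V E Q P u" and "finite V" "v \<in> V"
  shows "degree E v = (if v = u then card V - 1 else if v \<in> Q then card Q - 1 else 1)"
proof -
  interpret sgraph V E using is_kite_simple[OF assms(1,2)] by unfold_locales
  have parts: "Q \<inter> P = {}" "V = Q \<union> P" "u \<in> Q" using kite by (auto simp: is_kite_def)
  have "{w \<in> V. {v, w} \<in> E} =
          (if v = u then V - {u} else if v \<in> Q then Q - {v} else {u})"
    using is_kite_adjacent[OF kite] parts assms(3) by auto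
  thus ?thesis using degree_eq_card_neighbours[of v] finite_V parts by auto
qed

lemma sombor_bound_kite_form:
  assumes "card Q = n - k" "k + 3 \<le> n" "c = real (card Q) - 1"
  shows "sombor_bound n k = real (card Q - 1 choose 2) * (sqrt 2 * c)
           + real (card Q - 1) * sqrt ((real n - 1)\<^sup>2 + c\<^sup>2) + real k * sqrt ((real n - 1)\<^sup>2 + 1)"
proof -
  have nk: "real (n - k - 2) = c - 1" "real (n - k - 1) = c" "real (card Q - 1) = c"
    using assms by (auto simp: of_nat_diff)
  hence choose: "real (card Q - 1 choose 2) = c * (c - 1) / 2" by (simp add: real_choose_two)
  have "real (card Q - 1 choose 2) * (sqrt 2 * c) = (c - 1) * c\<^sup>2 / sqrt 2"
    unfolding divide_sqrt_two choose by (simp add: power2_eq_square algebra_simps)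
  thus ?thesis unfolding sombor_bound_def nk by simp
qed

lemma is_kite_sombor:
  assumes kite: "is_kite V E Q P u" and "finite V" "card Q \<ge> 3"
  shows "sombor E = sombor_bound (card V) (card P)"
proof -
  interpret sgraph V E using is_kite_simple[OF assms(1,2)] by unfold_locales
  have parts: "Q \<inter> P = {}" "V = Q \<union> P" "u \<in> Q" using kite by (auto simp: is_kite_def)
  have finite: "finite Q" "finite P" using finite_V parts by auto
  define c where "c = real (card Q) - 1"
  have c0: "c \<ge> 0" using assms(3) by (simp add: c_def)
  have n: "card V = card Q + card P" using parts finite by (simp add: card_Un_disjoint)
  have deg: "real (d w) = (if w = u then real (card V) - 1 else if w \<in> Q then c else 1)"
    if "w \<in> V" for w
    using is_kite_degree[OF kite finite_V that] assms(3) n by (simp add: c_def of_nat_diff)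
  have E: "E = clique_edges (Q - {u}) \<union> (\<lambda>w. {u, w}) ` (V - {u})"
    using kite unfolding is_kite_def clique_edges_eq by blast
  have "V - {u} = (Q - {u}) \<union> P" using parts by auto
  have "sombor E = (\<Sum>e\<in>clique_edges (Q - {u}). sombor_term e)
                   + (\<Sum>e\<in>(\<lambda>w. {u, w}) ` (V - {u}). sombor_term e)"
    unfolding sombor_eq_sum_terms arg_cong[OF E, of "sum sombor_term"]
    by (rule sum.union_disjoint) (auto simp: finite_clique_edges finite clique_edges_def finite_V)
  also have "(\<Sum>e\<in>clique_edges (Q - {u}). sombor_term e) = real (card Q - 1 choose 2) * (sqrt 2 * c)"
    using sum_sombor_term_clique[of "Q - {u}" c] finite parts c0 deg by simp
  also have "(\<Sum>e\<in>(\<lambda>w. {u, w}) ` (V - {u}). sombor_term e)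
             = (\<Sum>w\<in>(Q - {u}) \<union> P. sqrt ((real (card V) - 1)\<^sup>2 + (if w \<in> Q then c else 1)\<^sup>2))"
    using sum_sombor_term_star[of u "V - {u}"] deg parts \<open>V - {u} = (Q - {u}) \<union> P\<close> by simp
  also have "\<dots> = real (card Q - 1) * sqrt ((real (card V) - 1)\<^sup>2 + c\<^sup>2)
                   + real (card P) * sqrt ((real (card V) - 1)\<^sup>2 + 1)"
  proof -
    have "(\<Sum>w\<in>P. sqrt ((real (card V) - 1)\<^sup>2 + (if w \<in> Q then c else 1)\<^sup>2))
          = (\<Sum>w\<in>P. sqrt ((real (card V) - 1)\<^sup>2 + 1))"
      using parts by (intro sum.cong) auto
    thus ?thesis using finite parts by (subst sum.union_disjoint) auto
  qed
  finally show ?thesis using sombor_bound_kite_form[of Q "card V" "card P" c] n assms(3)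
    by (simp add: c_def)
qed

lemma is_kite_bij:
  assumes kite: "is_kite V E Q P u" and kite': "is_kite V' E' Q' P' u'"
    and "finite V" "finite V'" "card Q = card Q'" "card P = card P'"
  obtains f where "bij_betw f V V'" "f u = u'" "\<And>a. a \<in> V \<Longrightarrow> f a \<in> Q' \<longleftrightarrow> a \<in> Q"
proof -
  have parts: "Q \<inter> P = {}" "V = Q \<union> P" "u \<in> Q" using kite by (auto simp: is_kite_def)
  have parts': "Q' \<inter> P' = {}" "V' = Q' \<union> P'" "u' \<in> Q'" using kite' by (auto simp: is_kite_def)
  have finite: "finite Q" "finite P" "finite Q'" "finite P'" using assms(3,4) parts parts' by auto
  obtain g where g: "bij_betw g (Q - {u}) (Q' - {u'})"
    using finite_same_card_bij[of "Q - {u}" "Q' - {u'}"] finite parts parts' assms(5) by auto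
  obtain h where h: "bij_betw h P P'"
    using finite_same_card_bij[of P P'] finite assms(6) by auto
  define f where "f v = (if v = u then u' else if v \<in> Q then g v else h v)" for v
  have "bij_betw f {u} {u'}" by (simp add: f_def bij_betw_def)
  moreover have "bij_betw f (Q - {u}) (Q' - {u'})"
    using g by (rule bij_betw_cong[THEN iffD1, rotated]) (simp add: f_def)
  moreover have "bij_betw f P P'"
    using h by (rule bij_betw_cong[THEN iffD1, rotated]) (use parts in \<open>auto simp: f_def\<close>)
  ultimately have "bij_betw f ({u} \<union> (Q - {u}) \<union> P) ({u'} \<union> (Q' - {u'}) \<union> P')"
    using parts' by (intro bij_betw_combine) auto
  moreover have "{u} \<union> (Q - {u}) \<union> P = V" "{u'} \<union> (Q' - {u'}) \<union> P' = V'"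
    using parts parts' by auto
  ultimately have f: "bij_betw f V V'" by simp
  moreover have "f a \<in> Q' \<longleftrightarrow> a \<in> Q" if "a \<in> V" for a
  proof -
    have "f a \<in> Q' - {u'}" if "a \<in> Q - {u}" using bij_betwE[OF g] that by (simp add: f_def)
    moreover have "f a \<in> P'" if "a \<in> P" using bij_betwE[OF h] that parts by (auto simp: f_def)
    ultimately show ?thesis using \<open>a \<in> V\<close> parts parts' by (auto simp: f_def)
  qed
  ultimately show ?thesis using that by (simp add: f_def)
qed

lemma is_kite_graph_iso:
  assumes kite: "is_kite V E Q P u" and kite': "is_kite V' E' Q' P' u'"
    and "finite V" "finite V'" "card Q = card Q'" "card P = card P'"
  shows "graph_iso V E V' E'"
proof -
  obtain f where f: "bij_betw f V V'" "f u = u'" and fQ: "\<And>a. a \<in> V \<Longrightarrow> f a \<in> Q' \<longleftrightarrow> a \<in> Q"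
    using is_kite_bij[OF assms] by blast
  have parts: "P = V - Q" "u \<in> V" using kite by (auto simp: is_kite_def)
  have parts': "P' = V' - Q'" using kite' by (auto simp: is_kite_def)
  have "{a, b} \<in> E \<longleftrightarrow> {f a, f b} \<in> E'" if "a \<in> V" "b \<in> V" for a b
  proof -
    have "f a \<in> V'" "f b \<in> V'" using f(1) that by (auto dest: bij_betwE)
    moreover have "f a = f b \<longleftrightarrow> a = b" "f a = u' \<longleftrightarrow> a = u" "f b = u' \<longleftrightarrow> b = u"
      using f that parts(2) by (auto simp: bij_betw_def inj_on_def)
    ultimately show ?thesis
      using is_kite_adjacent[OF kite that] is_kite_adjacent[OF kite', of "f a" "f b"]
        fQ that parts parts' by auto
  qed
  thus ?thesis using f(1) by (auto simp: graph_iso_def)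
qed

lemma graph_iso_edges_image:
  assumes "simple_graph V E" "simple_graph V' E'" "bij_betw f V V'"
    and adj: "\<forall>a\<in>V. \<forall>b\<in>V. {a, b} \<in> E \<longleftrightarrow> {f a, f b} \<in> E'"
  shows "E' = (\<lambda>e. f ` e) ` E"
proof (intro equalityI subsetI)
  fix e' assume e': "e' \<in> E'"
  then obtain a' b' where ab: "e' = {a', b'}" "a' \<in> V'" "b' \<in> V'"
    using assms(2) by (auto simp: simple_graph_def)
  then obtain a b where "a \<in> V" "b \<in> V" "f a = a'" "f b = b'"
    using assms(3) by (metis bij_betw_iff_bijections)
  thus "e' \<in> (\<lambda>e. f ` e) ` E" using adj e' ab by (auto intro!: image_eqI[where x = "{a, b}"])
next
  fix e' assume "e' \<in> (\<lambda>e. f ` e) ` E"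
  then obtain a b where "e' = {f a, f b}" "{a, b} \<in> E" "a \<in> V" "b \<in> V"
    using assms(1) by (auto simp: simple_graph_def)
  thus "e' \<in> E'" using adj by blast
qed

lemma sombor_graph_iso:
  assumes G: "simple_graph V E" and G': "simple_graph V' E'" and iso: "graph_iso V E V' E'"
  shows "sombor E = sombor E'"
proof -
  interpret G: sgraph V E using G by unfold_locales
  obtain f where f: "bij_betw f V V'" and adj: "\<forall>a\<in>V. \<forall>b\<in>V. {a, b} \<in> E \<longleftrightarrow> {f a, f b} \<in> E'"
    using iso unfolding graph_iso_def by blast
  have inj: "inj_on f V" using f by (simp add: bij_betw_def)
  have E': "E' = (\<lambda>e. f ` e) ` E" using graph_iso_edges_image[OF G G' f adj] .
  have inj_edges: "inj_on (\<lambda>e. f ` e) E"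
  proof (rule inj_onI)
    fix e1 e2 assume "e1 \<in> E" "e2 \<in> E" "f ` e1 = f ` e2"
    thus "e1 = e2" using inj_on_image_eq_iff[OF inj] G.edges_subset_Pow by blast
  qed
  have degree: "degree E' (f v) = degree E v" if "v \<in> V" for v
  proof -
    have "f v \<in> f ` e \<longleftrightarrow> v \<in> e" if "e \<in> E" for e
      using inj_on_image_mem_iff[OF inj] \<open>v \<in> V\<close> that G.edges_subset_Pow by blast
    hence "{e' \<in> E'. f v \<in> e'} = (\<lambda>e. f ` e) ` {e \<in> E. v \<in> e}"
      unfolding E' by blast
    thus ?thesis unfolding degree_def
      using card_image[OF inj_on_subset[OF inj_edges]] by simp
  qed
  have "sombor E' = (\<Sum>e\<in>E. sqrt (\<Sum>v'\<in>f ` e. (real (degree E' v'))\<^sup>2))"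
    unfolding sombor_def E' by (simp add: sum.reindex[OF inj_edges])
  also have "\<dots> = sombor E"
    unfolding sombor_def
  proof (rule sum.cong[OF refl])
    fix e assume e: "e \<in> E"
    hence "e \<subseteq> V" using G.edges_subset_Pow by auto
    hence "(\<Sum>v'\<in>f ` e. (real (degree E' v'))\<^sup>2) = (\<Sum>v\<in>e. (real (degree E v))\<^sup>2)"
      using inj_on_subset[OF inj] degree by (simp add: sum.reindex subset_iff)
    thus "sqrt (\<Sum>v'\<in>f ` e. (real (degree E' v'))\<^sup>2) = sqrt (\<Sum>v\<in>e. (real (degree E v))\<^sup>2)"
      by simp
  qed
  finally show ?thesis by simp
qed

lemma kite_edges_is_kite:
  assumes "k < n"
  shows "is_kite (kite_vertices n) (kite_edges n k) {0..<n - k} {n - k..<n} 0"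
  using assms unfolding is_kite_def kite_vertices_def kite_edges_def clique_edges_eq by auto

theorem theorem3p6:
  fixes V :: "'a set" and E :: "'a set set" and n k :: nat
  assumes "simple_graph V E"
    and "connected_graph V E"
    and "card V = n"
    and "n \<ge> 3"
    and "k \<le> n - 3"
    and "card (pendent_vertices V E) = k"
  shows "sombor E \<le> real (n - k - 2) * (real (n - k - 1))^2 / sqrt 2
            + real k * sqrt ((real n - 1)^2 + 1)
            + real (n - k - 1) * sqrt ((real n - 1)^2 + (real (n - k - 1))^2)
    \<and> (sombor E = real (n - k - 2) * (real (n - k - 1))^2 / sqrt 2
            + real k * sqrt ((real n - 1)^2 + 1)
            + real (n - k - 1) * sqrt ((real n - 1)^2 + (real (n - k - 1))^2)
         \<longleftrightarrow> graph_iso V E (kite_vertices n) (kite_edges n k))"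
proof -
  interpret sgraph V E using assms(1) by unfold_locales
  have size: "card P + 3 \<le> card V" using assms by simp
  have kite: "is_kite (kite_vertices n) (kite_edges n k) {0..<n - k} {n - k..<n} 0"
    using assms by (intro kite_edges_is_kite) simp
  have "sombor E = sombor_bound n k \<longleftrightarrow> graph_iso V E (kite_vertices n) (kite_edges n k)"
  proof
    assume "sombor E = sombor_bound n k"
    then obtain u where "is_kite V E Q P u"
      using is_kite_if_sombor_eq_bound[OF size] assms by auto
    thus "graph_iso V E (kite_vertices n) (kite_edges n k)"
      using is_kite_graph_iso[OF _ kite] finite_V card_non_pendent assms
      by (simp add: kite_vertices_def)
  next
    assume "graph_iso V E (kite_vertices n) (kite_edges n k)"
    hence "sombor E = sombor (kite_edges n k)"
      using sombor_graph_iso is_kite_simple[OF kite] assms(1) by (simp add: kite_vertices_def)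
    also have "\<dots> = sombor_bound n k"
      using is_kite_sombor[OF kite] assms by (simp add: kite_vertices_def)
    finally show "sombor E = sombor_bound n k" .
  qed
  thus ?thesis using sombor_le_bound[OF size] assms unfolding sombor_bound_def by simp
qed

end
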